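(* Let $q=AB$ be a 2way-determined two-atom query over $R$ satisfying the standing assumption below. Then for every database $D$ and all facts $a,b,c\in D$ with $D\models q(ab)$: if $D\models q(ac)$ then $c\sim b$; and if $D\models q(cb)$ then $c\sim a$.
   Context: $R$ is a relation symbol of arity $k\ge1$ whose first $l$ positions form its primary key. Facts $R(\bar a)$, atoms $R(\bar x)$; $\mathrm{vars}(A)$ is the variable set of atom $A$, $\overline{\mathrm{key}}(t)$ the tuple of first $l$ entries of $t$ and $\mathrm{key}(t)$ their set; $a\sim b$ iff $\overline{\mathrm{key}}(a)=\overline{\mathrm{key}}(b)$. A database is a finite set of facts; $D\models q(ab)$ means $a,b\in D$ and $a=\mu(A)$, $b=\mu(B)$ for some mapping $\mu$ of variables to elements. $q=AB$ is 2way-determined if $\mathrm{key}(A)\not\subseteq\mathrm{key}(B)$, $\mathrm{key}(B)\not\subseteq\mathrm{key}(A)$, $\mathrm{key}(A)\subseteq\mathrm{vars}(B)$ and $\mathrm{key}(B)\subseteq\mathrm{vars}(A)$. Standing assumption: $\overline{\mathrm{key}}(A)\ne\overline{\mathrm{key}}(B)$ and $q$ is not equivalent over all consistent databases to a single-atom query. *)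

theory Defs
  imports Main
begin

text \<open>Relation R of arity k whose first l positions form the primary key.
 Facts and atoms are lists of length k (of elements resp. variables).\<close>

definition keytup :: "nat \<Rightarrow> 'a list \<Rightarrow> 'a list" where
  "keytup l t = take l t"

definition keyset :: "nat \<Rightarrow> 'a list \<Rightarrow> 'a set" where
  "keyset l t = set (take l t)"

definition vars :: "'v list \<Rightarrow> 'v set" where
  "vars A = set A"

definition keyeq :: "nat \<Rightarrow> 'e list \<Rightarrow> 'e list \<Rightarrow> bool" where
  "keyeq l a b \<longleftrightarrow> keytup l a = keytup l b"

definition is_database :: "nat \<Rightarrow> 'e list set \<Rightarrow> bool" where
  "is_database k D \<longleftrightarrow> finite D \<and> (\<forall>a\<in>D. length a = k)"

definition consistent :: "nat \<Rightarrow> 'e list set \<Rightarrow> bool" where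
  "consistent l D \<longleftrightarrow> (\<forall>a\<in>D. \<forall>b\<in>D. keyeq l a b \<longrightarrow> a = b)"

definition models_at :: "'e list set \<Rightarrow> 'v list \<Rightarrow> 'v list \<Rightarrow> 'e list \<Rightarrow> 'e list \<Rightarrow> bool" where
  "models_at D A B a b \<longleftrightarrow> a \<in> D \<and> b \<in> D \<and> (\<exists>\<mu>. map \<mu> A = a \<and> map \<mu> B = b)"

definition models_q :: "'e list set \<Rightarrow> 'v list \<Rightarrow> 'v list \<Rightarrow> bool" where
  "models_q D A B \<longleftrightarrow> (\<exists>a b. models_at D A B a b)"

definition models_atom :: "'e list set \<Rightarrow> 'w list \<Rightarrow> bool" where
  "models_atom D C \<longleftrightarrow> (\<exists>\<mu>. map \<mu> C \<in> D)"

text \<open>q = AB is equivalent over all consistent databases to a single-atom query.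
 Databases range over the countably infinite domain nat of constants.\<close>
definition equiv_single_atom :: "nat \<Rightarrow> nat \<Rightarrow> 'v list \<Rightarrow> 'v list \<Rightarrow> bool" where
  "equiv_single_atom k l A B \<longleftrightarrow>
     (\<exists>C :: 'v list. length C = k \<and>
        (\<forall>D :: nat list set. is_database k D \<and> consistent l D \<longrightarrow>
            (models_q D A B \<longleftrightarrow> models_atom D C)))"

definition twoway_determined :: "nat \<Rightarrow> 'v list \<Rightarrow> 'v list \<Rightarrow> bool" where
  "twoway_determined l A B \<longleftrightarrow>
     \<not> keyset l A \<subseteq> keyset l B \<and> \<not> keyset l B \<subseteq> keyset l A \<and>
     keyset l A \<subseteq> vars B \<and> keyset l B \<subseteq> vars A"

end

theory Submission
  imports Defs
begin

text \<open>Since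
  \<open>keyset l B \<subseteq> vars A\<close>, two embeddings sharing the \<open>A\<close>-fact send \<open>B\<close> to facts with
  the same key, and symmetrically with \<open>A\<close> and \<open>B\<close> exchanged. Only these two inclusions of
  2way-determinacy are needed.\<close>

lemma keyeq_map_if_keyset_subset_vars:
  assumes "map \<mu> A = map \<nu> A" and "keyset l B \<subseteq> vars A"
  shows "keyeq l (map \<mu> B) (map \<nu> B)"
proof -
  have "map \<mu> (take l B) = map \<nu> (take l B)"
    using assms by (auto simp: map_eq_conv keyset_def vars_def)
  then show ?thesis
    by (simp add: keyeq_def keytup_def take_map)
qed

lemma models_at_same_first_keyeq:
  assumes "models_at D A B a b" and "models_at D A B a c" and "keyset l B \<subseteq> vars A"
  shows "keyeq l c b"
proof -
  obtain \<nu> where "map \<nu> A = a" "map \<nu> B = b"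
    using assms(1) by (auto simp: models_at_def)
  moreover obtain \<mu> where "map \<mu> A = a" "map \<mu> B = c"
    using assms(2) by (auto simp: models_at_def)
  ultimately show ?thesis
    using keyeq_map_if_keyset_subset_vars[OF _ assms(3), of \<mu> \<nu>] by simp
qed

lemma models_at_same_second_keyeq:
  assumes "models_at D A B a b" and "models_at D A B c b" and "keyset l A \<subseteq> vars B"
  shows "keyeq l c a"
proof -
  obtain \<nu> where "map \<nu> A = a" "map \<nu> B = b"
    using assms(1) by (auto simp: models_at_def)
  moreover obtain \<mu> where "map \<mu> A = c" "map \<mu> B = b"
    using assms(2) by (auto simp: models_at_def)
  ultimately show ?thesis
    using keyeq_map_if_keyset_subset_vars[OF _ assms(3), of \<mu> \<nu>] by simp
qed

theorem lemma7p1: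
  fixes k l :: nat and A B :: "'v list" and D :: "'e list set" and a b c :: "'e list"
  assumes "1 \<le> k" and "l \<le> k"
    and "length A = k" and "length B = k"
    and "twoway_determined l A B"
    and "keytup l A \<noteq> keytup l B"
    and "\<not> equiv_single_atom k l A B"
    and "is_database k D"
    and "a \<in> D" and "b \<in> D" and "c \<in> D"
    and "models_at D A B a b"
  shows "(models_at D A B a c \<longrightarrow> keyeq l c b) \<and> (models_at D A B c b \<longrightarrow> keyeq l c a)"
proof -
  have "keyset l B \<subseteq> vars A" and "keyset l A \<subseteq> vars B"
    using assms(5) by (auto simp: twoway_determined_def)
  then show ?thesis
    using assms(12) models_at_same_first_keyeq models_at_same_second_keyeq by blast
qed

end
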